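(* Consider the algorithm described in the context, suppose it does not terminate after finitely many steps, that the iterates are bounded (there is $R>0$ with $\{x^k\}\subseteq B_R(0)$), and that condition (B.3) holds: for every subsequence $\{k_\ell\}$ such that $\{x^{k_\ell}\}$ converges and $\alpha_{k_\ell}\to0$, $\psi(x^{k_\ell}+\alpha_{k_\ell}\bar s^{k_\ell})-\psi(x^{k_\ell})-\alpha_{k_\ell}\psi'(x^{k_\ell};\bar s^{k_\ell})=o(\alpha_{k_\ell})$ as $\ell\to\infty$. Then there exists a function $h:(0,\infty)\to[0,\infty]$ with $\lim_{\Delta\to0^+}h(\Delta)=0$ such that for every $\Delta>0$ and every $k$ with $\Delta_k\le\Delta$, $$\psi(x^k+\alpha_k\bar s^k)-\psi(x^k)-\alpha_k\psi'(x^k;\bar s^k)\le h(\Delta)\,\alpha_k.$$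
   Context: Problem: minimize $\psi=f+\varphi$ where $f:\mathbb{R}^n\to\mathbb{R}$ is continuously differentiable and $\varphi:\mathbb{R}^n\to\mathbb{R}$ is convex. Notation: $\|\cdot\|$ Euclidean norm, $B_r(x)$ open ball, $\bar v=v/\|v\|$, $\psi'(x;d)$ directional derivative, $\partial\psi(x)=\nabla f(x)+\partial\varphi(x)$; $x$ is stationary if $0\in\partial\psi(x)$. Pseudo-gradient: $g(x)=u(x)d(x)$ where, for non-stationary $x$, $\|d(x)\|=1$, $\psi'(x;d(x))<0$, $u(x)\in[\psi'(x;d(x)),0)$, and for stationary $x$, $d(x)=0$, $u(x)=0$. Safeguards: for $\|d\|=1$, $\Gamma_{\max}(x,d)=\sup\{T>0: t\mapsto\psi(x+td)\text{ is } C^1\text{ on }(0,T)\}$, $\Gamma(x)=\inf_{\|d\|=1}\Gamma_{\max}(x,d)$; a stepsize safeguard $(x,d)\mapsto\Gamma(x,d)\in(0,\infty]$ is fixed. Truncation: $\psi$ can be truncated with data $\mathbb{R}^n=S_0\supset\cdots\supset S_m$, $\delta\in(0,\infty]$, $\kappa>0$, $T:\mathbb{R}^n\times(0,\delta]\to\mathbb{R}^n$ meaning (i) $\Gamma(x)\ge\delta$ on $S_m$; (ii) for $a\in(0,\delta]$, $x\in S_i\setminus S_{i+1}$, $i<m$: if $\Gamma(x)\ge a$ then $T(x,a)=x$, else $T(x,a)\in S_{i+1}$, $\Gamma(T(x,a))\ge a$, $\|T(x,a)-x\|\le\kappa a$. Put $S_{m+1}=\emptyset$. Algorithm: parameters $0<\eta<\eta_1<\eta_2<1$,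 $0<r_1<1<r_2$, $\Delta_{\max}>0$, $\gamma_1,\gamma_2>0$, a positive strictly decreasing summable sequence $(\epsilon_s)$ with $\epsilon_s\le\delta$, a nonincreasing $\ell:(0,\infty)\to[0,\frac12]$ with $\ell(\Delta)\to0$ as $\Delta\to0^+$; start $x^0$, $\Delta_0>0$, counters $c_0=\dots=c_m=0$. Iteration $k$: $g^k=g(x^k)$; stop if $g^k=0$. Choose $B^k\in\mathbb{R}^{n\times n}$, model $m_k(s)=\psi(x^k)+\langle g^k,s\rangle+\frac12\langle s,B^ks\rangle$, Cauchy point $s^k_C=-\alpha^C_kg^k$ with $\alpha^C_k\in\arg\min_{0\le t\le\Delta_k/\|g^k\|}m_k(-tg^k)$. Choose $s^k$, $\|s^k\|\le\Delta_k$, with $m_k(0)-m_k(s^k)\ge\frac{\gamma_1}{2}\|g^k\|\min\{\Delta_k,\gamma_2\|g^k\|\}$ and $m_k(0)-m_k(s^k)\ge(1-\ell(\|s^k\|))(m_k(0)-m_k(s^k_C))$. Let $\rho^1_k=\frac{\psi(x^k)-\psi(x^k+s^k)}{m_k(0)-m_k(s^k)}$. If $\rho^1_k\ge\eta_1$: $\tilde x^k=x^k+s^k$, $\Delta_{k+1}=\min\{\Delta_{\max},r_2\Delta_k\}$ if $\rho^1_k>\eta_2$ and $\Delta_{k+1}=\Delta_k$ otherwise. Stepsize computation (performed for the analysis in every iteration, used by the algorithm when $\rho^1_k<\eta_1$): $\alpha_k=\min\{\Gamma(x^k,\bar s^k),\|s^k\|\}$; if $m_k(0)-m_k(\alpha_k\bar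 s^k)<\frac{\alpha_k}{2\|s^k\|}(m_k(0)-m_k(s^k))$, replace $s^k$ by $s^k_C$ and $\alpha_k=\min\{\Gamma(x^k,\bar s^k_C),\|s^k_C\|\}$; $\rho^2_k=\frac{\psi(x^k)-\psi(x^k+\alpha_k\bar s^k)}{m_k(0)-m_k(\alpha_k\bar s^k)}$. If $\rho^1_k<\eta_1$: $\Delta_{k+1}=r_1\Delta_k$ if $\rho^2_k<\eta_1$, $=\min\{\Delta_{\max},r_2\Delta_k\}$ if $\rho^2_k>\eta_2$, $=\Delta_k$ otherwise; $\tilde x^k=x^k+\alpha_k\bar s^k$ if $\rho^2_k\ge\eta$ and $\tilde x^k=x^k$ otherwise. Truncation step: set $\tilde x=\tilde x^k$ and repeat {find $i$ with $\tilde x\in S_i\setminus S_{i+1}$; if $\Gamma(\tilde x)<\epsilon_{c_i}$ set $\tilde x\leftarrow T(\tilde x,\epsilon_{c_i})$, $c_i\leftarrow c_i+1$; else stop}; $x^{k+1}=\tilde x$. Here $\alpha_k,\bar s^k$ denote the quantities of the stepsize computation. *)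

theory Defs
  imports "HOL-Analysis.Analysis" "HOL-Library.Landau_Symbols"
begin

definition dirderiv :: "('a::real_normed_vector \<Rightarrow> real) \<Rightarrow> 'a \<Rightarrow> 'a \<Rightarrow> real" where
  "dirderiv \<psi> x v = Lim (at_right 0) (\<lambda>t. (\<psi> (x + t *\<^sub>R v) - \<psi> x) / t)"

definition subdiff :: "('a::real_inner \<Rightarrow> real) \<Rightarrow> 'a \<Rightarrow> 'a set" where
  "subdiff \<phi> x = {v. \<forall>y. \<phi> x + v \<bullet> (y - x) \<le> \<phi> y}"

definition stationary :: "('a::real_inner \<Rightarrow> 'a) \<Rightarrow> ('a \<Rightarrow> real) \<Rightarrow> 'a \<Rightarrow> bool" where
  "stationary gradf \<phi> x \<longleftrightarrow> 0 \<in> {gradf x + v | v. v \<in> subdiff \<phi> x}"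

text \<open>Pseudo-gradient g(x) = u(x) d(x).\<close>
definition is_pseudo_gradient ::
  "('a::real_inner \<Rightarrow> real) \<Rightarrow> ('a \<Rightarrow> bool) \<Rightarrow> ('a \<Rightarrow> real) \<Rightarrow> ('a \<Rightarrow> 'a) \<Rightarrow> bool" where
  "is_pseudo_gradient \<psi> stat u d \<longleftrightarrow>
     (\<forall>x. (stat x \<longrightarrow> d x = 0 \<and> u x = 0) \<and>
          (\<not> stat x \<longrightarrow> norm (d x) = 1 \<and> dirderiv \<psi> x (d x) < 0 \<and>
                         dirderiv \<psi> x (d x) \<le> u x \<and> u x < 0))"

definition C1_on :: "real set \<Rightarrow> (real \<Rightarrow> real) \<Rightarrow> bool" where
  "C1_on S h \<longleftrightarrow> (\<exists>h'. (\<forall>t\<in>S. (h has_real_derivative h' t) (at t)) \<and> continuous_on S h')"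

definition Gamma_max :: "('a::real_normed_vector \<Rightarrow> real) \<Rightarrow> 'a \<Rightarrow> 'a \<Rightarrow> ereal" where
  "Gamma_max \<psi> x v = Sup {ereal T | T. T > 0 \<and> C1_on {0<..<T} (\<lambda>t. \<psi> (x + t *\<^sub>R v))}"

definition Gamma :: "('a::real_normed_vector \<Rightarrow> real) \<Rightarrow> 'a \<Rightarrow> ereal" where
  "Gamma \<psi> x = Inf {Gamma_max \<psi> x v | v. norm v = 1}"

text \<open>Level i with x in S_i minus S_(i+1), where S_(m+1) is empty.\<close>
definition level :: "nat \<Rightarrow> (nat \<Rightarrow> 'a set) \<Rightarrow> 'a \<Rightarrow> nat" where
  "level m S x = (THE i. i \<le> m \<and> x \<in> S i \<and> (i < m \<longrightarrow> x \<notin> S (Suc i)))"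

definition truncation_data ::
  "('a::real_normed_vector \<Rightarrow> real) \<Rightarrow> nat \<Rightarrow> (nat \<Rightarrow> 'a set) \<Rightarrow> ereal \<Rightarrow> real \<Rightarrow> ('a \<Rightarrow> real \<Rightarrow> 'a) \<Rightarrow> bool" where
  "truncation_data \<psi> m S \<delta> \<kappa> T \<longleftrightarrow>
     S 0 = UNIV \<and> (\<forall>i<m. S (Suc i) \<subseteq> S i) \<and> 0 < \<delta> \<and> 0 < \<kappa> \<and>
     (\<forall>x\<in>S m. \<delta> \<le> Gamma \<psi> x) \<and>
     (\<forall>a x i. 0 < a \<and> ereal a \<le> \<delta> \<and> i < m \<and> x \<in> S i \<and> x \<notin> S (Suc i) \<longrightarrow>
        (ereal a \<le> Gamma \<psi> x \<longrightarrow> T x a = x) \<and>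
        (Gamma \<psi> x < ereal a \<longrightarrow> T x a \<in> S (Suc i) \<and> ereal a \<le> Gamma \<psi> (T x a) \<and>
                                     norm (T x a - x) \<le> \<kappa> * a))"

text \<open>The repeat-loop of the truncation step: trunc_loop ... x c x' c' means that
  started at point x with counters c the loop stops with point x' and counters c'.\<close>
inductive trunc_loop ::
  "('a::real_normed_vector \<Rightarrow> real) \<Rightarrow> nat \<Rightarrow> (nat \<Rightarrow> 'a set) \<Rightarrow> (nat \<Rightarrow> real) \<Rightarrow> ('a \<Rightarrow> real \<Rightarrow> 'a)
   \<Rightarrow> 'a \<Rightarrow> (nat \<Rightarrow> nat) \<Rightarrow> 'a \<Rightarrow> (nat \<Rightarrow> nat) \<Rightarrow> bool"
  for \<psi> m S eps T where
  stop: "ereal (eps (c (level m S x))) \<le> Gamma \<psi> x \<Longrightarrow> trunc_loop \<psi> m S eps T x c x c"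
| step: "Gamma \<psi> x < ereal (eps (c (level m S x))) \<Longrightarrow>
         trunc_loop \<psi> m S eps T (T x (eps (c (level m S x))))
                    (c(level m S x := Suc (c (level m S x)))) x' c' \<Longrightarrow>
         trunc_loop \<psi> m S eps T x c x' c'"

definition model :: "real \<Rightarrow> real^'n \<Rightarrow> real^'n^'n \<Rightarrow> real^'n \<Rightarrow> real" where
  "model psix g B s = psix + g \<bullet> s + 1/2 * (s \<bullet> (B *v s))"

definition safe_alpha :: "(real^'n \<Rightarrow> real^'n \<Rightarrow> ereal) \<Rightarrow> real^'n \<Rightarrow> real^'n \<Rightarrow> real" where
  "safe_alpha Gs x s = real_of_ereal (min (Gs x (sgn s)) (ereal (norm s)))"

definition alg_sdir ::
  "(real^'n \<Rightarrow> real) \<Rightarrow> (real^'n \<Rightarrow> real) \<Rightarrow> (real^'n \<Rightarrow> real^'n) \<Rightarrow> (real^'n \<Rightarrow> real^'n \<Rightarrow> ereal)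
   \<Rightarrow> (nat \<Rightarrow> real^'n) \<Rightarrow> (nat \<Rightarrow> real^'n^'n) \<Rightarrow> (nat \<Rightarrow> real^'n) \<Rightarrow> (nat \<Rightarrow> real) \<Rightarrow> nat \<Rightarrow> real^'n" where
  "alg_sdir \<psi> u d Gs x B s aC k =
     (let xk = x k; g = u xk *\<^sub>R d xk; M = model (\<psi> xk) g (B k); sk = s k;
          sC = - (aC k) *\<^sub>R g; a = safe_alpha Gs xk sk
      in if M 0 - M (a *\<^sub>R sgn sk) < a / (2 * norm sk) * (M 0 - M sk) then sC else sk)"

definition alg_alpha ::
  "(real^'n \<Rightarrow> real) \<Rightarrow> (real^'n \<Rightarrow> real) \<Rightarrow> (real^'n \<Rightarrow> real^'n) \<Rightarrow> (real^'n \<Rightarrow> real^'n \<Rightarrow> ereal)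
   \<Rightarrow> (nat \<Rightarrow> real^'n) \<Rightarrow> (nat \<Rightarrow> real^'n^'n) \<Rightarrow> (nat \<Rightarrow> real^'n) \<Rightarrow> (nat \<Rightarrow> real) \<Rightarrow> nat \<Rightarrow> real" where
  "alg_alpha \<psi> u d Gs x B s aC k = safe_alpha Gs (x k) (alg_sdir \<psi> u d Gs x B s aC k)"

text \<open>One iteration k of the algorithm (for non-stationary x^k): Cauchy point, choice of s^k,
  ratio tests, radius update, trial point and truncation step producing x^(k+1), c^(k+1).\<close>
definition alg_iter ::
  "(real^'n \<Rightarrow> real) \<Rightarrow> (real^'n \<Rightarrow> real) \<Rightarrow> (real^'n \<Rightarrow> real^'n) \<Rightarrow> (real^'n \<Rightarrow> real^'n \<Rightarrow> ereal)
   \<Rightarrow> nat \<Rightarrow> (nat \<Rightarrow> (real^'n) set) \<Rightarrow> (real^'n \<Rightarrow> real \<Rightarrow> real^'n)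
   \<Rightarrow> real \<Rightarrow> real \<Rightarrow> real \<Rightarrow> real \<Rightarrow> real \<Rightarrow> real \<Rightarrow> real \<Rightarrow> real \<Rightarrow> (nat \<Rightarrow> real) \<Rightarrow> (real \<Rightarrow> real)
   \<Rightarrow> (nat \<Rightarrow> real^'n) \<Rightarrow> (nat \<Rightarrow> real) \<Rightarrow> (nat \<Rightarrow> nat \<Rightarrow> nat) \<Rightarrow> (nat \<Rightarrow> real^'n^'n)
   \<Rightarrow> (nat \<Rightarrow> real^'n) \<Rightarrow> (nat \<Rightarrow> real) \<Rightarrow> nat \<Rightarrow> bool" where
  "alg_iter \<psi> u d Gs m S T \<eta> \<eta>1 \<eta>2 r1 r2 Dmax \<gamma>1 \<gamma>2 eps ell x D c B s aC k \<longleftrightarrow>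
    (let xk = x k; g = u xk *\<^sub>R d xk; M = model (\<psi> xk) g (B k); sk = s k;
         sC = - (aC k) *\<^sub>R g;
         \<rho>1 = (\<psi> xk - \<psi> (xk + sk)) / (M 0 - M sk);
         sd = alg_sdir \<psi> u d Gs x B s aC k;
         a = alg_alpha \<psi> u d Gs x B s aC k;
         \<rho>2 = (\<psi> xk - \<psi> (xk + a *\<^sub>R sgn sd)) / (M 0 - M (a *\<^sub>R sgn sd))
     in 0 \<le> aC k \<and> aC k \<le> D k / norm g \<and>
        (\<forall>t. 0 \<le> t \<and> t \<le> D k / norm g \<longrightarrow> M (- (aC k) *\<^sub>R g) \<le> M (- t *\<^sub>R g)) \<and>
        norm sk \<le> D k \<and>
        \<gamma>1 / 2 * norm g * min (D k) (\<gamma>2 * norm g) \<le> M 0 - M sk \<and>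
        (1 - ell (norm sk)) * (M 0 - M sC) \<le> M 0 - M sk \<and>
        (\<exists>xt. (if \<eta>1 \<le> \<rho>1 then
                 xt = xk + sk \<and>
                 D (Suc k) = (if \<eta>2 < \<rho>1 then min Dmax (r2 * D k) else D k)
               else
                 D (Suc k) = (if \<rho>2 < \<eta>1 then r1 * D k
                              else if \<eta>2 < \<rho>2 then min Dmax (r2 * D k) else D k) \<and>
                 xt = (if \<eta> \<le> \<rho>2 then xk + a *\<^sub>R sgn sd else xk)) \<and>
              trunc_loop \<psi> m S eps T xt (c k) (x (Suc k)) (c (Suc k))))"

definition alg_run ::
  "(real^'n \<Rightarrow> real) \<Rightarrow> (real^'n \<Rightarrow> real) \<Rightarrow> (real^'n \<Rightarrow> real^'n) \<Rightarrow> (real^'n \<Rightarrow> real^'n \<Rightarrow> ereal)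
   \<Rightarrow> nat \<Rightarrow> (nat \<Rightarrow> (real^'n) set) \<Rightarrow> ereal \<Rightarrow> real \<Rightarrow> (real^'n \<Rightarrow> real \<Rightarrow> real^'n)
   \<Rightarrow> real \<Rightarrow> real \<Rightarrow> real \<Rightarrow> real \<Rightarrow> real \<Rightarrow> real \<Rightarrow> real \<Rightarrow> real \<Rightarrow> (nat \<Rightarrow> real) \<Rightarrow> (real \<Rightarrow> real)
   \<Rightarrow> (nat \<Rightarrow> real^'n) \<Rightarrow> (nat \<Rightarrow> real) \<Rightarrow> (nat \<Rightarrow> nat \<Rightarrow> nat) \<Rightarrow> (nat \<Rightarrow> real^'n^'n)
   \<Rightarrow> (nat \<Rightarrow> real^'n) \<Rightarrow> (nat \<Rightarrow> real) \<Rightarrow> bool" where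
  "alg_run \<psi> u d Gs m S \<delta> \<kappa> T \<eta> \<eta>1 \<eta>2 r1 r2 Dmax \<gamma>1 \<gamma>2 eps ell x D c B s aC \<longleftrightarrow>
     0 < \<eta> \<and> \<eta> < \<eta>1 \<and> \<eta>1 < \<eta>2 \<and> \<eta>2 < 1 \<and> 0 < r1 \<and> r1 < 1 \<and> 1 < r2 \<and>
     0 < Dmax \<and> 0 < \<gamma>1 \<and> 0 < \<gamma>2 \<and>
     (\<forall>j. 0 < eps j \<and> eps (Suc j) < eps j \<and> ereal (eps j) \<le> \<delta>) \<and> summable eps \<and>
     (\<forall>t>0. 0 \<le> ell t \<and> ell t \<le> 1/2) \<and> (\<forall>t t'. 0 < t \<and> t \<le> t' \<longrightarrow> ell t' \<le> ell t) \<and>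
     (ell \<longlongrightarrow> 0) (at_right 0) \<and>
     (\<forall>y v. 0 < Gs y v) \<and>
     truncation_data \<psi> m S \<delta> \<kappa> T \<and>
     0 < D 0 \<and> c 0 = (\<lambda>_. 0) \<and>
     (\<forall>k. alg_iter \<psi> u d Gs m S T \<eta> \<eta>1 \<eta>2 r1 r2 Dmax \<gamma>1 \<gamma>2 eps ell x D c B s aC k)"

end

theory Submission
  imports Defs
begin

text \<open>Since \<open>\<alpha>\<^sub>k \<le> \<Delta>\<^sub>k\<close>, the claim says that the remainder quotient
  \<open>(\<psi>(x\<^sup>k + \<alpha>\<^sub>k s\<^sup>k) - \<psi>(x\<^sup>k) - \<alpha>\<^sub>k \<psi>'(x\<^sup>k; s\<^sup>k)) / \<alpha>\<^sub>k\<close> becomes uniformly small as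
  \<open>\<Delta>\<^sub>k \<rightarrow> 0\<close>; \<open>h(\<Delta>)\<close> is its supremum over all \<open>k\<close> with \<open>\<Delta>\<^sub>k \<le> \<Delta>\<close>. If the quotient stayed
  above some \<open>\<epsilon> > 0\<close> on iterates with arbitrarily small \<open>\<Delta>\<^sub>k\<close>, we could select a subsequence
  along which \<open>\<Delta>\<^sub>k\<close>, hence \<open>\<alpha>\<^sub>k\<close>, tends to \<open>0\<close>, and by boundedness a further subsequence on
  which \<open>x\<^sup>k\<close> converges. Condition (B.3) makes the remainder \<open>o(\<alpha>\<^sub>k)\<close> there, a contradiction.\<close>

lemma safe_alpha_bounds:
  assumes "0 < Gs x (sgn v)"
  shows "0 \<le> safe_alpha Gs x v \<and> safe_alpha Gs x v \<le> norm v"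
  using assms unfolding safe_alpha_def by (cases "Gs x (sgn v)") (auto simp: min_def)

lemma norm_alg_sdir_le:
  assumes "alg_iter \<psi> u d Gs m S T \<eta> \<eta>1 \<eta>2 r1 r2 Dmax \<gamma>1 \<gamma>2 eps ell x D c B s aC k"
    and "u (x k) *\<^sub>R d (x k) \<noteq> 0"
  shows "norm (alg_sdir \<psi> u d Gs x B s aC k) \<le> D k"
proof -
  let ?g = "u (x k) *\<^sub>R d (x k)"
  have aC: "0 \<le> aC k" "aC k \<le> D k / norm ?g" and sk: "norm (s k) \<le> D k"
    using assms(1) unfolding alg_iter_def Let_def by blast+
  have "norm (aC k *\<^sub>R ?g) = aC k * norm ?g"
    using aC(1) by (simp only: norm_scaleR abs_of_nonneg)
  also have "\<dots> \<le> D k"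
    using aC(2) pos_le_divide_eq[of "norm ?g" "aC k" "D k"] assms(2) by simp
  finally show ?thesis
    using sk unfolding alg_sdir_def Let_def by auto
qed

lemma alg_alpha_bounds:
  assumes "alg_run \<psi> u d Gs m S \<delta> \<kappa> T \<eta> \<eta>1 \<eta>2 r1 r2 Dmax \<gamma>1 \<gamma>2 eps ell x D c B s aC"
    and "u (x k) *\<^sub>R d (x k) \<noteq> 0"
  shows "0 \<le> alg_alpha \<psi> u d Gs x B s aC k \<and> alg_alpha \<psi> u d Gs x B s aC k \<le> D k"
proof -
  let ?sd = "alg_sdir \<psi> u d Gs x B s aC k"
  have "0 < Gs (x k) (sgn ?sd)"
    and "alg_iter \<psi> u d Gs m S T \<eta> \<eta>1 \<eta>2 r1 r2 Dmax \<gamma>1 \<gamma>2 eps ell x D c B s aC k"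
    using assms(1) unfolding alg_run_def by blast+
  with assms(2) show ?thesis
    using safe_alpha_bounds[of Gs "x k" ?sd] norm_alg_sdir_le unfolding alg_alpha_def by fastforce
qed

lemma subseq_tendsto_zero_if_inf_zero:
  fixes f :: "nat \<Rightarrow> real"
  assumes pos: "\<And>k. k \<in> K \<Longrightarrow> 0 < f k"
    and inf_zero: "\<And>e. 0 < e \<Longrightarrow> \<exists>k\<in>K. f k \<le> e"
  obtains r where "strict_mono r" "\<And>j. r j \<in> K" "(\<lambda>j. f (r j)) \<longlonglongrightarrow> 0"
proof -
  have beyond: "\<exists>k\<in>K. N < k \<and> f k \<le> e" if "0 < e" for N e
  proof -
    define \<mu> where "\<mu> = Min (insert e (f ` (K \<inter> {..N})))"
    have "0 < \<mu>"
      unfolding \<mu>_def using \<open>0 < e\<close> pos by (subst Min_gr_iff) auto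
    then obtain k where "k \<in> K" "f k \<le> \<mu> / 2"
      using inf_zero by (meson half_gt_zero)
    moreover have "\<mu> \<le> e" and \<mu>_le: "\<And>i. i \<in> K \<Longrightarrow> i \<le> N \<Longrightarrow> \<mu> \<le> f i"
      unfolding \<mu>_def by (auto intro: Min_le)
    moreover have "f k < \<mu>"
      using \<open>0 < \<mu>\<close> \<open>f k \<le> \<mu> / 2\<close> by linarith
    ultimately have "N < k" "f k \<le> e"
      using \<mu>_le[of k] by force+
    with \<open>k \<in> K\<close> show ?thesis
      by blast
  qed
  obtain r where r: "\<And>j. r j \<in> K \<and> f (r j) \<le> inverse (real (Suc j)) \<and> r j < r (Suc j)"
    using dependent_nat_choice[where P = "\<lambda>j k. k \<in> K \<and> f k \<le> inverse (real (Suc j))"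
        and Q = "\<lambda>_ k k'. k < k'"] beyond by (metis inverse_positive_iff_positive of_nat_0_less_iff zero_less_Suc)
  have "0 \<le> f (r j)" "f (r j) \<le> inverse (real (Suc j))" for j
    using r pos[of "r j"] by auto
  then have "(\<lambda>j. f (r j)) \<longlonglongrightarrow> 0"
    by (intro tendsto_sandwich[OF _ _ tendsto_const LIMSEQ_inverse_real_of_nat]) simp_all
  with r show ?thesis
    using that strict_mono_Suc_iff by blast
qed

lemma uniform_little_o_if_little_o_on_subseqs:
  fixes x :: "nat \<Rightarrow> 'a::heine_borel" and a \<Delta> L :: "nat \<Rightarrow> real"
  assumes "bounded (range x)"
    and a_bounds: "\<And>k. 0 \<le> a k" "\<And>k. a k \<le> \<Delta> k"
    and little_o: "\<And>r. strict_mono r \<Longrightarrow> convergent (\<lambda>l. x (r l)) \<Longrightarrow> (\<lambda>l. a (r l)) \<longlonglongrightarrow> 0 \<Longrightarrow>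
               (\<lambda>l. L (r l)) \<in> o[sequentially](\<lambda>l. a (r l))"
    and "0 < \<epsilon>"
  shows "\<exists>\<Delta>\<^sub>0>0. \<forall>k. \<Delta> k \<le> \<Delta>\<^sub>0 \<and> 0 < a k \<longrightarrow> L k \<le> \<epsilon> * a k"
proof (rule ccontr)
  define K where "K = {k. 0 < a k \<and> \<epsilon> * a k < L k}"
  assume "\<not> ?thesis"
  then have K_inf_zero: "\<exists>k\<in>K. \<Delta> k \<le> e" if "0 < e" for e
    using that unfolding K_def by (auto simp: not_le)
  have K_pos: "0 < \<Delta> k" if "k \<in> K" for k
    using that a_bounds(2)[of k] unfolding K_def by auto
  obtain r where r: "strict_mono r" "\<And>j. r j \<in> K" "(\<lambda>j. \<Delta> (r j)) \<longlonglongrightarrow> 0"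
    using subseq_tendsto_zero_if_inf_zero[OF K_pos K_inf_zero] by blast
  have "bounded (range (\<lambda>j. x (r j)))"
    by (rule bounded_subset[OF \<open>bounded (range x)\<close>]) auto
  from bounded_imp_convergent_subsequence[OF this]
  obtain l r' where r': "strict_mono r'" "((\<lambda>j. x (r j)) \<circ> r') \<longlonglongrightarrow> l"
    by blast
  have "(\<lambda>j. a (r j)) \<longlonglongrightarrow> 0"
    by (rule tendsto_sandwich[OF _ _ tendsto_const r(3)]) (auto simp: a_bounds)
  then have "(\<lambda>j. a (r (r' j))) \<longlonglongrightarrow> 0"
    using LIMSEQ_subseq_LIMSEQ[OF _ r'(1)] by (simp add: o_def)
  moreover have "strict_mono (\<lambda>j. r (r' j))"
    using strict_mono_o[OF r(1) r'(1)] by (simp add: o_def)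
  moreover have "convergent (\<lambda>j. x (r (r' j)))"
    using r'(2) by (auto simp: convergent_def o_def)
  ultimately have "(\<lambda>j. L (r (r' j))) \<in> o[sequentially](\<lambda>j. a (r (r' j)))"
    using little_o by blast
  from landau_o.smallD[OF this \<open>0 < \<epsilon>\<close>]
  obtain j where "norm (L (r (r' j))) \<le> \<epsilon> * norm (a (r (r' j)))"
    unfolding eventually_sequentially by blast
  with r(2)[of "r' j"] show False
    unfolding K_def by auto
qed

lemma modulus_if_uniform_little_o:
  fixes a \<Delta> L :: "nat \<Rightarrow> real"
  assumes a_nonneg: "\<And>k. 0 \<le> a k"
    and L_at_zero: "\<And>k. a k = 0 \<Longrightarrow> L k \<le> 0"
    and uniform: "\<And>\<epsilon>. 0 < \<epsilon> \<Longrightarrow> \<exists>\<Delta>\<^sub>0>0. \<forall>k. \<Delta> k \<le> \<Delta>\<^sub>0 \<and> 0 < a k \<longrightarrow> L k \<le> \<epsilon> * a k"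
  shows "\<exists>h :: real \<Rightarrow> ereal. (\<forall>t>0. 0 \<le> h t) \<and> (h \<longlongrightarrow> 0) (at_right 0) \<and>
           (\<forall>t>0. \<forall>k. \<Delta> k \<le> t \<longrightarrow> ereal (L k) \<le> h t * ereal (a k))"
proof -
  define h where "h t = max 0 (SUP k\<in>{k. \<Delta> k \<le> t \<and> 0 < a k}. ereal (L k / a k))" for t
  have bound: "ereal (L k) \<le> h t * ereal (a k)" if "\<Delta> k \<le> t" for t k
  proof (cases "a k = 0")
    case True
    then show ?thesis
      using L_at_zero by (simp flip: zero_ereal_def)
  next
    case False
    with a_nonneg have "0 < a k"
      by (simp add: order_less_le)
    with that have "ereal (L k / a k) \<le> h t"
      unfolding h_def by (intro max.coboundedI2 SUP_upper) auto
    then have "ereal (L k / a k) * ereal (a k) \<le> h t * ereal (a k)"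
      using \<open>0 < a k\<close> by (intro ereal_mult_right_mono) auto
    with \<open>0 < a k\<close> show ?thesis
      by simp
  qed
  have "(h \<longlongrightarrow> 0) (at_right 0)"
  proof (rule order_tendstoI)
    fix b :: ereal
    assume "b < 0"
    then show "\<forall>\<^sub>F t in at_right 0. b < h t"
      unfolding h_def by (intro always_eventually allI) (auto intro: less_le_trans)
  next
    fix b :: ereal
    assume "0 < b"
    then obtain e where "0 < e" "ereal e < b"
      using ereal_dense2 by force
    then obtain \<Delta>\<^sub>0 where "0 < \<Delta>\<^sub>0" and \<Delta>\<^sub>0: "\<forall>k. \<Delta> k \<le> \<Delta>\<^sub>0 \<and> 0 < a k \<longrightarrow> L k \<le> e * a k"
      using uniform by blast
    have "h t \<le> ereal e" if "t < \<Delta>\<^sub>0" for t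
      unfolding h_def using \<Delta>\<^sub>0 \<open>0 < e\<close> that
      by (intro max.boundedI SUP_least) (auto simp: pos_divide_le_eq)
    then show "\<forall>\<^sub>F t in at_right 0. h t < b"
      using eventually_at_right_real[OF \<open>0 < \<Delta>\<^sub>0\<close>] \<open>ereal e < b\<close>
      by (elim eventually_mono) (auto intro: le_less_trans)
  qed
  moreover have "\<forall>t>0. 0 \<le> h t"
    unfolding h_def by simp
  ultimately show ?thesis
    using bound by blast
qed

theorem lemma4p6:
  fixes f \<phi> :: "real^'n \<Rightarrow> real" and gradf :: "real^'n \<Rightarrow> real^'n"
    and u :: "real^'n \<Rightarrow> real" and d :: "real^'n \<Rightarrow> real^'n"
    and Gs :: "real^'n \<Rightarrow> real^'n \<Rightarrow> ereal"
    and m :: nat and S :: "nat \<Rightarrow> (real^'n) set" and \<delta> :: ereal and \<kappa> :: real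
    and T :: "real^'n \<Rightarrow> real \<Rightarrow> real^'n"
    and \<eta> \<eta>1 \<eta>2 r1 r2 Dmax \<gamma>1 \<gamma>2 :: real and eps :: "nat \<Rightarrow> real" and ell :: "real \<Rightarrow> real"
    and x :: "nat \<Rightarrow> real^'n" and D :: "nat \<Rightarrow> real" and c :: "nat \<Rightarrow> nat \<Rightarrow> nat"
    and B :: "nat \<Rightarrow> real^'n^'n" and s :: "nat \<Rightarrow> real^'n" and aC :: "nat \<Rightarrow> real"
    and \<psi> :: "real^'n \<Rightarrow> real"
    and alpha :: "nat \<Rightarrow> real" and sb :: "nat \<Rightarrow> real^'n"
  assumes f_C1: "\<forall>y. (f has_derivative (\<lambda>h. gradf y \<bullet> h)) (at y)" "continuous_on UNIV gradf"
    and \<phi>_convex: "convex_on UNIV \<phi>"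
    and \<psi>_def: "\<psi> = (\<lambda>y. f y + \<phi> y)"
    and pg: "is_pseudo_gradient \<psi> (stationary gradf \<phi>) u d"
    and run: "alg_run \<psi> u d Gs m S \<delta> \<kappa> T \<eta> \<eta>1 \<eta>2 r1 r2 Dmax \<gamma>1 \<gamma>2 eps ell x D c B s aC"
    and nonterm: "\<forall>k. u (x k) *\<^sub>R d (x k) \<noteq> 0"
    and alpha_def: "\<forall>k. alpha k = alg_alpha \<psi> u d Gs x B s aC k"
    and sb_def: "\<forall>k. sb k = sgn (alg_sdir \<psi> u d Gs x B s aC k)"
    and bounded: "\<exists>R>0. \<forall>k. x k \<in> ball 0 R"
    and B3: "\<forall>r::nat \<Rightarrow> nat. strict_mono r \<and> convergent (\<lambda>l. x (r l)) \<and> (\<lambda>l. alpha (r l)) \<longlonglongrightarrow> 0 \<longrightarrow>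
               (\<lambda>l. \<psi> (x (r l) + alpha (r l) *\<^sub>R sb (r l)) - \<psi> (x (r l))
                     - alpha (r l) * dirderiv \<psi> (x (r l)) (sb (r l)))
               \<in> o[sequentially](\<lambda>l. alpha (r l))"
  shows "\<exists>h :: real \<Rightarrow> ereal. (\<forall>\<Delta>>0. 0 \<le> h \<Delta>) \<and> (h \<longlongrightarrow> 0) (at_right 0) \<and>
           (\<forall>\<Delta>>0. \<forall>k. D k \<le> \<Delta> \<longrightarrow>
              ereal (\<psi> (x k + alpha k *\<^sub>R sb k) - \<psi> (x k) - alpha k * dirderiv \<psi> (x k) (sb k))
                \<le> h \<Delta> * ereal (alpha k))"
proof -
  define L where "L k = \<psi> (x k + alpha k *\<^sub>R sb k) - \<psi> (x k) - alpha k * dirderiv \<psi> (x k) (sb k)" for k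
  have alpha_bounds: "0 \<le> alpha k" "alpha k \<le> D k" for k
    using alg_alpha_bounds[OF run] nonterm alpha_def by auto
  obtain R where "\<forall>k. x k \<in> ball 0 R"
    using bounded by blast
  then have "bounded (range x)"
    by (intro bounded_subset[OF bounded_ball[of 0 R]]) auto
  have little_o: "(\<lambda>l. L (r l)) \<in> o[sequentially](\<lambda>l. alpha (r l))"
    if "strict_mono r" "convergent (\<lambda>l. x (r l))" "(\<lambda>l. alpha (r l)) \<longlonglongrightarrow> 0" for r
    using B3[rule_format, of r] that unfolding L_def by blast
  have "L k \<le> 0" if "alpha k = 0" for k
    using that unfolding L_def by simp
  moreover have "\<exists>\<Delta>\<^sub>0>0. \<forall>k. D k \<le> \<Delta>\<^sub>0 \<and> 0 < alpha k \<longrightarrow> L k \<le> \<epsilon> * alpha k" if "0 < \<epsilon>" for \<epsilon>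
    using uniform_little_o_if_little_o_on_subseqs[OF \<open>bounded (range x)\<close> alpha_bounds little_o that] .
  ultimately have "\<exists>h :: real \<Rightarrow> ereal. (\<forall>t>0. 0 \<le> h t) \<and> (h \<longlongrightarrow> 0) (at_right 0) \<and>
      (\<forall>t>0. \<forall>k. D k \<le> t \<longrightarrow> ereal (L k) \<le> h t * ereal (alpha k))"
    by (rule modulus_if_uniform_little_o[OF alpha_bounds(1)])
  then show ?thesis
    unfolding L_def .
qed

end
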